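(* Let $\mathsf{P}_N$ be a parameterized program (in the class described in the context) with pre-condition $\varphi(N)$ and post-condition $\psi(N)$, such that for every loop $L$ of $\mathsf{P}_N$ the quantity $c_L = k_L(N) - k_L(N-1)$ is a constant (independent of $N$). Let $\mathsf{P}^p_N$ be the program obtained from $\mathsf{P}_N$ by transforming every loop $L$ as follows: its termination condition $\ell < k_L(N)$ is replaced by $\ell < k_L(N-1)$, and the last $c_L$ iterations of $L$ are peeled, i.e. $c_L$ unrolled copies of the loop body (for loop counter values $\ell = k_L(N-1), \ldots, k_L(N)-1$) are inserted so that they execute immediately after the loop body has been iterated $k_L(N-1)$ times. Then $\{\varphi(N)\}\;\mathsf{P}_N\;\{\psi(N)\}$ holds iff $\{\varphi(N)\}\;\mathsf{P}^p_N\;\{\psi(N)\}$ holds.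
   Context: Programs are generated by the grammar: statements are scalar assignments $v := E$, array assignments $A[E] := E$, conditionals, sequential composition, and non-nested loops $\mathbf{for}(\ell := 0; \ell < E; \ell := \ell+1)\{S\}$ whose bodies contain no loops; expressions are built from array reads, scalar variables, loop counters, integer constants and the parameter $N$ using $+,-,*,/$; Boolean conditions are relational comparisons of expressions combined by AND, OR, NOT. $N$ is a positive integer parameter. Each loop $L$ has a unique loop counter $\ell$, initialized to $0$ at the start of the loop and incremented by $1$ at the end of each iteration and not otherwise updated; its bound $E$ is an expression in $N$, and $k_L(N)$ denotes the number of iterations of $L$ in the program with parameter $N$. A Hoare triple $\{\alpha\}\;\mathsf{Q}\;\{\beta\}$ holds if every execution of $\mathsf{Q}$ from a state satisfying $\alpha$ ends in a state satisfying $\beta$. *)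

theory Defs
  imports Main
begin

type_synonym vname = string
type_synonym aname = string
type_synonym lname = string

datatype aexp =
    Const int
  | Var vname
  | Ctr lname
  | ParN
  | Read aname aexp
  | Plus aexp aexp
  | Minus aexp aexp
  | Times aexp aexp
  | Div aexp aexp

datatype relop = Lt | Le | Eq | Ne | Gt | Ge

datatype bexp =
    Rel relop aexp aexp
  | And bexp bexp
  | Or bexp bexp
  | Not bexp

datatype com =
    Skip
  | Assign vname aexp
  | AAssign aname aexp aexp
  | If bexp com com
  | Seq com com
  | For lname aexp com   (* for (l := 0; l < E; l := l+1) { S } *)

text \<open>Program states consist of scalar variables and arrays. Loop counters are
  local to their loop and are kept in an environment.\<close>

record state =
  scal :: "vname \<Rightarrow> int"
  arr  :: "aname \<Rightarrow> int \<Rightarrow> int"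

fun aval :: "int \<Rightarrow> (lname \<Rightarrow> int) \<Rightarrow> state \<Rightarrow> aexp \<Rightarrow> int" where
  "aval N env s (Const c) = c"
| "aval N env s (Var x) = scal s x"
| "aval N env s (Ctr l) = env l"
| "aval N env s ParN = N"
| "aval N env s (Read a e) = arr s a (aval N env s e)"
| "aval N env s (Plus e1 e2) = aval N env s e1 + aval N env s e2"
| "aval N env s (Minus e1 e2) = aval N env s e1 - aval N env s e2"
| "aval N env s (Times e1 e2) = aval N env s e1 * aval N env s e2"
| "aval N env s (Div e1 e2) = aval N env s e1 div aval N env s e2"

fun rval :: "relop \<Rightarrow> int \<Rightarrow> int \<Rightarrow> bool" where
  "rval Lt a b = (a < b)"
| "rval Le a b = (a \<le> b)"
| "rval Eq a b = (a = b)"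
| "rval Ne a b = (a \<noteq> b)"
| "rval Gt a b = (a > b)"
| "rval Ge a b = (a \<ge> b)"

fun bval :: "int \<Rightarrow> (lname \<Rightarrow> int) \<Rightarrow> state \<Rightarrow> bexp \<Rightarrow> bool" where
  "bval N env s (Rel r e1 e2) = rval r (aval N env s e1) (aval N env s e2)"
| "bval N env s (And b1 b2) = (bval N env s b1 \<and> bval N env s b2)"
| "bval N env s (Or b1 b2) = (bval N env s b1 \<or> bval N env s b2)"
| "bval N env s (Not b) = (\<not> bval N env s b)"

inductive exec :: "int \<Rightarrow> (lname \<Rightarrow> int) \<Rightarrow> com \<Rightarrow> state \<Rightarrow> state \<Rightarrow> bool"
  and exec_loop :: "int \<Rightarrow> (lname \<Rightarrow> int) \<Rightarrow> lname \<Rightarrow> int \<Rightarrow> com \<Rightarrow> int \<Rightarrow> state \<Rightarrow> state \<Rightarrow> bool"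
where
  Skip: "exec N env Skip s s"
| Assign: "exec N env (Assign x e) s (s\<lparr>scal := (scal s)(x := aval N env s e)\<rparr>)"
| AAssign: "exec N env (AAssign a i e) s
     (s\<lparr>arr := (arr s)(a := (arr s a)(aval N env s i := aval N env s e))\<rparr>)"
| IfT: "bval N env s b \<Longrightarrow> exec N env c1 s t \<Longrightarrow> exec N env (If b c1 c2) s t"
| IfF: "\<not> bval N env s b \<Longrightarrow> exec N env c2 s t \<Longrightarrow> exec N env (If b c1 c2) s t"
| Seq: "exec N env c1 s u \<Longrightarrow> exec N env c2 u t \<Longrightarrow> exec N env (Seq c1 c2) s t"
| For: "exec_loop N env l (aval N env s E) c 0 s t \<Longrightarrow> exec N env (For l E c) s t"
| LoopStop: "\<not> i < bnd \<Longrightarrow> exec_loop N env l bnd c i s s"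
| LoopStep: "i < bnd \<Longrightarrow> exec N (env(l := i)) c s u \<Longrightarrow> exec_loop N env l bnd c (i + 1) u t
     \<Longrightarrow> exec_loop N env l bnd c i s t"

text \<open>(The loop bound is an expression in N only, hence constant during the loop.)\<close>

definition hoare :: "int \<Rightarrow> (state \<Rightarrow> bool) \<Rightarrow> com \<Rightarrow> (state \<Rightarrow> bool) \<Rightarrow> bool" where
  "hoare N \<alpha> Q \<beta> \<longleftrightarrow> (\<forall>s t. \<alpha> s \<longrightarrow> exec N (\<lambda>_. 0) Q s t \<longrightarrow> \<beta> t)"

fun ctrs_a :: "aexp \<Rightarrow> lname set" where
  "ctrs_a (Const c) = {}"
| "ctrs_a (Var x) = {}"
| "ctrs_a (Ctr l) = {l}"
| "ctrs_a ParN = {}"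
| "ctrs_a (Read a e) = ctrs_a e"
| "ctrs_a (Plus e1 e2) = ctrs_a e1 \<union> ctrs_a e2"
| "ctrs_a (Minus e1 e2) = ctrs_a e1 \<union> ctrs_a e2"
| "ctrs_a (Times e1 e2) = ctrs_a e1 \<union> ctrs_a e2"
| "ctrs_a (Div e1 e2) = ctrs_a e1 \<union> ctrs_a e2"

fun ctrs_b :: "bexp \<Rightarrow> lname set" where
  "ctrs_b (Rel r e1 e2) = ctrs_a e1 \<union> ctrs_a e2"
| "ctrs_b (And b1 b2) = ctrs_b b1 \<union> ctrs_b b2"
| "ctrs_b (Or b1 b2) = ctrs_b b1 \<union> ctrs_b b2"
| "ctrs_b (Not b) = ctrs_b b"

fun ctrs_c :: "com \<Rightarrow> lname set" where
  "ctrs_c Skip = {}"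
| "ctrs_c (Assign x e) = ctrs_a e"
| "ctrs_c (AAssign a i e) = ctrs_a i \<union> ctrs_a e"
| "ctrs_c (If b c1 c2) = ctrs_b b \<union> ctrs_c c1 \<union> ctrs_c c2"
| "ctrs_c (Seq c1 c2) = ctrs_c c1 \<union> ctrs_c c2"
| "ctrs_c (For l E c) = ctrs_a E \<union> ctrs_c c"

fun is_Nexp :: "aexp \<Rightarrow> bool" where
  "is_Nexp (Const c) = True"
| "is_Nexp ParN = True"
| "is_Nexp (Plus e1 e2) = (is_Nexp e1 \<and> is_Nexp e2)"
| "is_Nexp (Minus e1 e2) = (is_Nexp e1 \<and> is_Nexp e2)"
| "is_Nexp (Times e1 e2) = (is_Nexp e1 \<and> is_Nexp e2)"
| "is_Nexp (Div e1 e2) = (is_Nexp e1 \<and> is_Nexp e2)"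
| "is_Nexp _ = False"

fun loop_free :: "com \<Rightarrow> bool" where
  "loop_free (For l E c) = False"
| "loop_free (If b c1 c2) = (loop_free c1 \<and> loop_free c2)"
| "loop_free (Seq c1 c2) = (loop_free c1 \<and> loop_free c2)"
| "loop_free _ = True"

fun loop_ctrs :: "com \<Rightarrow> lname list" where
  "loop_ctrs (For l E c) = l # loop_ctrs c"
| "loop_ctrs (If b c1 c2) = loop_ctrs c1 @ loop_ctrs c2"
| "loop_ctrs (Seq c1 c2) = loop_ctrs c1 @ loop_ctrs c2"
| "loop_ctrs _ = []"

fun wf_com :: "com \<Rightarrow> bool" where
  "wf_com Skip = True"
| "wf_com (Assign x e) = (ctrs_a e = {})"
| "wf_com (AAssign a i e) = (ctrs_a i = {} \<and> ctrs_a e = {})"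
| "wf_com (If b c1 c2) = (ctrs_b b = {} \<and> wf_com c1 \<and> wf_com c2)"
| "wf_com (Seq c1 c2) = (wf_com c1 \<and> wf_com c2)"
| "wf_com (For l E c) = (is_Nexp E \<and> loop_free c \<and> ctrs_c c \<subseteq> {l})"

definition wf_prog :: "com \<Rightarrow> bool" where
  "wf_prog P \<longleftrightarrow> wf_com P \<and> distinct (loop_ctrs P)"

text \<open>Value of an expression in N (the loop bound); the environment and state
  are irrelevant for expressions in N.\<close>
definition Nval :: "int \<Rightarrow> aexp \<Rightarrow> int" where
  "Nval N E = aval N (\<lambda>_. 0) \<lparr>scal = (\<lambda>_. 0), arr = (\<lambda>_ _. 0)\<rparr> E"

text \<open>Number of iterations k_L(N) of a loop with bound E.\<close>
definition iters :: "aexp \<Rightarrow> int \<Rightarrow> nat" where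
  "iters E N = nat (Nval N E)"

fun loops :: "com \<Rightarrow> (lname \<times> aexp \<times> com) list" where
  "loops (For l E c) = [(l, E, c)]"
| "loops (If b c1 c2) = loops c1 @ loops c2"
| "loops (Seq c1 c2) = loops c1 @ loops c2"
| "loops _ = []"

fun substN :: "aexp \<Rightarrow> aexp" where
  "substN ParN = Minus ParN (Const 1)"
| "substN (Read a e) = Read a (substN e)"
| "substN (Plus e1 e2) = Plus (substN e1) (substN e2)"
| "substN (Minus e1 e2) = Minus (substN e1) (substN e2)"
| "substN (Times e1 e2) = Times (substN e1) (substN e2)"
| "substN (Div e1 e2) = Div (substN e1) (substN e2)"
| "substN e = e"

fun subst_a :: "lname \<Rightarrow> int \<Rightarrow> aexp \<Rightarrow> aexp" where
  "subst_a l v (Ctr l') = (if l' = l then Const v else Ctr l')"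
| "subst_a l v (Read a e) = Read a (subst_a l v e)"
| "subst_a l v (Plus e1 e2) = Plus (subst_a l v e1) (subst_a l v e2)"
| "subst_a l v (Minus e1 e2) = Minus (subst_a l v e1) (subst_a l v e2)"
| "subst_a l v (Times e1 e2) = Times (subst_a l v e1) (subst_a l v e2)"
| "subst_a l v (Div e1 e2) = Div (subst_a l v e1) (subst_a l v e2)"
| "subst_a l v e = e"

fun subst_b :: "lname \<Rightarrow> int \<Rightarrow> bexp \<Rightarrow> bexp" where
  "subst_b l v (Rel r e1 e2) = Rel r (subst_a l v e1) (subst_a l v e2)"
| "subst_b l v (And b1 b2) = And (subst_b l v b1) (subst_b l v b2)"
| "subst_b l v (Or b1 b2) = Or (subst_b l v b1) (subst_b l v b2)"
| "subst_b l v (Not b) = Not (subst_b l v b)"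

fun subst_c :: "lname \<Rightarrow> int \<Rightarrow> com \<Rightarrow> com" where
  "subst_c l v Skip = Skip"
| "subst_c l v (Assign x e) = Assign x (subst_a l v e)"
| "subst_c l v (AAssign a i e) = AAssign a (subst_a l v i) (subst_a l v e)"
| "subst_c l v (If b c1 c2) = If (subst_b l v b) (subst_c l v c1) (subst_c l v c2)"
| "subst_c l v (Seq c1 c2) = Seq (subst_c l v c1) (subst_c l v c2)"
| "subst_c l v (For l' E c) = For l' (subst_a l v E) (subst_c l v c)"

definition seqs :: "com list \<Rightarrow> com" where
  "seqs cs = foldr Seq cs Skip"

fun peel :: "int \<Rightarrow> com \<Rightarrow> com" where
  "peel N (For l E c) =
     Seq (For l (substN E) c)
         (seqs (map (\<lambda>i. subst_c l (int i) c) [iters E (N - 1) ..< iters E N]))"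
| "peel N (If b c1 c2) = If b (peel N c1) (peel N c2)"
| "peel N (Seq c1 c2) = Seq (peel N c1) (peel N c2)"
| "peel N c = c"

end

theory Submission
  imports Defs
begin

text \<open>A loop whose bound evaluates to \<open>k\<close> behaves like the sequence of \<open>k\<close> copies of its
  body with the counter instantiated to \<open>0, \<dots>, k - 1\<close>. Splitting this sequence at
  \<open>k\<^sub>L(N - 1)\<close> yields the loop with bound \<open>k\<^sub>L(N - 1)\<close> followed by the peeled copies, so
  peeling preserves the input/output relation, and hence every Hoare triple, as soon as
  \<open>k\<^sub>L(N - 1) \<le> k\<^sub>L(N)\<close>. That inequality follows from the constant increment \<open>c\<^sub>L\<close>: were
  \<open>c\<^sub>L\<close> negative, the counts \<open>k\<^sub>L(M) = k\<^sub>L(0) + M c\<^sub>L\<close> would eventually become negative.\<close>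

lemma constant_increment_nonneg:
  fixes f :: "int \<Rightarrow> int"
  assumes increment: "\<And>M. M \<ge> 1 \<Longrightarrow> f M - f (M - 1) = c"
    and nonneg: "\<And>M. M \<ge> 0 \<Longrightarrow> f M \<ge> 0"
  shows "c \<ge> 0"
proof (rule ccontr)
  assume "\<not> c \<ge> 0"
  have linear: "f (int n) = f 0 + int n * c" for n
  proof (induction n)
    case (Suc n)
    with increment[of "int n + 1"] show ?case by (simp add: algebra_simps)
  qed simp
  define n where "n = nat (f 0) + 1"
  from \<open>\<not> c \<ge> 0\<close> have "int n * c \<le> int n * (-1)"
    by (intro mult_left_mono) simp_all
  then have "f (int n) < 0"
    using linear[of n] nonneg[of 0] by (simp add: n_def)
  with nonneg[of "int n"] show False by simp
qed

inductive_cases SkipE[elim!]: "exec N env Skip s t"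
inductive_cases AssignE[elim!]: "exec N env (Assign x e) s t"
inductive_cases AAssignE[elim!]: "exec N env (AAssign a i e) s t"
inductive_cases IfE[elim!]: "exec N env (If b c1 c2) s t"
inductive_cases SeqE[elim!]: "exec N env (Seq c1 c2) s t"
inductive_cases ForE[elim!]: "exec N env (For l E c) s t"
inductive_cases exec_loopE: "exec_loop N env l bnd c i s t"

lemma exec_Skip_iff: "exec N env Skip s t \<longleftrightarrow> t = s"
  by (auto intro: Skip)

lemma exec_Assign_iff:
  "exec N env (Assign x e) s t \<longleftrightarrow> t = s\<lparr>scal := (scal s)(x := aval N env s e)\<rparr>"
  by (auto intro: Assign)

lemma exec_AAssign_iff:
  "exec N env (AAssign a i e) s t \<longleftrightarrow>
     t = s\<lparr>arr := (arr s)(a := (arr s a)(aval N env s i := aval N env s e))\<rparr>"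
  by (auto intro: AAssign)

lemma exec_If_iff:
  "exec N env (If b c1 c2) s t \<longleftrightarrow>
     (if bval N env s b then exec N env c1 s t else exec N env c2 s t)"
  by (auto intro: IfT IfF)

lemma exec_Seq_iff: "exec N env (Seq c1 c2) s t \<longleftrightarrow> (\<exists>u. exec N env c1 s u \<and> exec N env c2 u t)"
  by (auto intro: Seq)

lemma exec_For_iff: "exec N env (For l E c) s t \<longleftrightarrow> exec_loop N env l (aval N env s E) c 0 s t"
  by (auto intro: For)

lemma exec_loop_stop: "\<not> i < bnd \<Longrightarrow> exec_loop N env l bnd c i s t \<longleftrightarrow> t = s"
  by (auto intro: LoopStop elim: exec_loopE)

lemma exec_loop_step:
  "i < bnd \<Longrightarrow> exec_loop N env l bnd c i s t \<longleftrightarrow>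
     (\<exists>u. exec N (env(l := i)) c s u \<and> exec_loop N env l bnd c (i + 1) u t)"
  by (blast intro: LoopStep elim: exec_loopE)

lemma aval_subst_a: "aval N env s (subst_a l v e) = aval N (env(l := v)) s e"
  by (induction e) auto

lemma bval_subst_b: "bval N env s (subst_b l v b) = bval N (env(l := v)) s b"
  by (induction b) (simp_all only: subst_b.simps bval.simps aval_subst_a)

lemma exec_subst_c:
  "loop_free c \<Longrightarrow> exec N env (subst_c l v c) s t \<longleftrightarrow> exec N (env(l := v)) c s t"
  by (induction c arbitrary: s t)
    (simp_all add: exec_Skip_iff exec_Assign_iff exec_AAssign_iff exec_If_iff exec_Seq_iff
      aval_subst_a bval_subst_b)

lemma exec_seqs_Nil: "exec N env (seqs []) s t \<longleftrightarrow> t = s"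
  by (simp add: seqs_def exec_Skip_iff)

lemma exec_seqs_Cons:
  "exec N env (seqs (c # cs)) s t \<longleftrightarrow> (\<exists>u. exec N env c s u \<and> exec N env (seqs cs) u t)"
  by (simp add: seqs_def exec_Seq_iff)

lemma exec_seqs_append:
  "exec N env (seqs (cs @ ds)) s t \<longleftrightarrow>
     (\<exists>u. exec N env (seqs cs) s u \<and> exec N env (seqs ds) u t)"
  by (induction cs arbitrary: s) (auto simp: exec_seqs_Nil exec_seqs_Cons)

abbreviation unrolled :: "lname \<Rightarrow> com \<Rightarrow> nat list \<Rightarrow> com" where
  "unrolled l c js \<equiv> seqs (map (\<lambda>j. subst_c l (int j) c) js)"

lemma exec_loop_unroll:
  assumes "loop_free c"
  shows "exec_loop N env l (int k) c (int i) s t \<longleftrightarrow> exec N env (unrolled l c [i..<k]) s t"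
proof (induction "k - i" arbitrary: i s)
  case 0
  then show ?case by (simp add: exec_loop_stop exec_seqs_Nil)
next
  case (Suc d)
  then have "i < k" and "[i..<k] = i # [Suc i..<k]" by (simp_all add: upt_conv_Cons)
  with Suc.hyps(1)[of "Suc i"] Suc.hyps(2) show ?case
    by (simp add: exec_loop_step exec_seqs_Cons exec_subst_c[OF assms] add.commute)
qed

lemma exec_For_unroll:
  assumes "loop_free c"
  shows "exec N env (For l E c) s t \<longleftrightarrow> exec N env (unrolled l c [0..<nat (aval N env s E)]) s t"
proof (cases "aval N env s E \<ge> 0")
  case True
  then show ?thesis
    using exec_loop_unroll[OF assms, of N env l "nat (aval N env s E)" 0] by (simp add: exec_For_iff)
next
  case False
  then show ?thesis by (simp add: exec_For_iff exec_loop_stop exec_seqs_Nil)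
qed

lemma aval_substN: "aval N env s (substN e) = aval (N - 1) env s e"
  by (induction e) auto

lemma aval_Nexp: "is_Nexp e \<Longrightarrow> aval N env s e = Nval N e"
  unfolding Nval_def by (induction e) auto

lemma nat_aval_Nexp_eq_iters: "is_Nexp E \<Longrightarrow> nat (aval N env s E) = iters E N"
  by (simp add: aval_Nexp iters_def)

lemma exec_peel_For:
  assumes "is_Nexp E" and "loop_free c" and "iters E (N - 1) \<le> iters E N"
  shows "exec N env (peel N (For l E c)) s t \<longleftrightarrow> exec N env (For l E c) s t"
proof -
  have split: "[0..<iters E N] = [0..<iters E (N - 1)] @ [iters E (N - 1)..<iters E N]"
    using assms(3) by (metis le0 le_add_diff_inverse upt_add_eq_append)
  have "exec N env (peel N (For l E c)) s t \<longleftrightarrow>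
      (\<exists>u. exec N env (For l (substN E) c) s u \<and>
           exec N env (unrolled l c [iters E (N - 1)..<iters E N]) u t)"
    by (simp only: peel.simps exec_Seq_iff)
  also have "\<dots> \<longleftrightarrow>
      (\<exists>u. exec N env (unrolled l c [0..<iters E (N - 1)]) s u \<and>
           exec N env (unrolled l c [iters E (N - 1)..<iters E N]) u t)"
    by (simp add: exec_For_unroll[OF assms(2)] aval_substN nat_aval_Nexp_eq_iters[OF assms(1)])
  also have "\<dots> \<longleftrightarrow> exec N env (unrolled l c [0..<iters E N]) s t"
    by (simp only: split map_append exec_seqs_append)
  also have "\<dots> \<longleftrightarrow> exec N env (For l E c) s t"
    by (simp add: exec_For_unroll[OF assms(2)] nat_aval_Nexp_eq_iters[OF assms(1)])
  finally show ?thesis .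
qed

lemma exec_peel_iff:
  assumes "wf_com P" and "\<forall>(l, E, c) \<in> set (loops P). iters E (N - 1) \<le> iters E N"
  shows "exec N env (peel N P) s t \<longleftrightarrow> exec N env P s t"
  using assms
proof (induction P arbitrary: s t)
  case (If b c1 c2)
  then show ?case by (simp add: exec_If_iff)
next
  case (Seq c1 c2)
  then show ?case by (simp add: exec_Seq_iff)
next
  case (For l E c)
  then show ?case using exec_peel_For[of E c N env l s t] by simp
qed simp_all

theorem lemma1:
  fixes P :: com and \<phi> \<psi> :: "int \<Rightarrow> state \<Rightarrow> bool" and N :: int
  assumes "wf_prog P"
    and "\<forall>(l, E, c) \<in> set (loops P). \<exists>cL :: int. \<forall>M :: int. M \<ge> 1 \<longrightarrow>
           int (iters E M) - int (iters E (M - 1)) = cL"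
    and "N \<ge> 1"
  shows "hoare N (\<phi> N) P (\<psi> N) \<longleftrightarrow> hoare N (\<phi> N) (peel N P) (\<psi> N)"
proof -
  have "iters E (N - 1) \<le> iters E N" if "(l, E, c) \<in> set (loops P)" for l E c
  proof -
    from assms(2) that obtain cL where
      "\<forall>M :: int. M \<ge> 1 \<longrightarrow> int (iters E M) - int (iters E (M - 1)) = cL"
      by blast
    with constant_increment_nonneg[of "\<lambda>M. int (iters E M)" cL] assms(3) show ?thesis
      by force
  qed
  moreover from assms(1) have "wf_com P"
    by (simp add: wf_prog_def)
  ultimately show ?thesis
    using exec_peel_iff[of P N] unfolding hoare_def by blast
qed

end
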